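(* Let $d\ge2$ and let $\mathcal{H}$ be a $d$-uniform simple hypergraph such that any two distinct edges $S,S'$ with $S\cap S'\neq\emptyset$ satisfy $|S\cap S'|=d-1$. Let $x$ be a simplicial vertex of $\mathcal{H}$, $S=\{x,x_2,\dots,x_d\}$ an edge containing $x$, and $N(S)=\{z_1,\dots,z_t\}$ with $z_1,\dots,z_t$ pairwise distinct. Let $S_1,\dots,S_t$ be distinct edges of $\mathcal{H}$ with $S_\ell\setminus S=\{z_\ell\}$ and $x\notin S_\ell$ for all $1\le\ell\le t$, and let $\mathcal{H}_2$ be the induced subhypergraph of $\mathcal{H}$ on $V(\mathcal{H})\setminus\{x,x_2,\dots,x_d,z_1,\dots,z_t\}$. If $\mathcal{S}'$ is a self disjoint set in $\mathcal{H}_2$ of type $(i-1-t,\,j-d-t)$, then $\mathcal{S}=\mathcal{S}'\cup\{S,S_1,\dots,S_t\}$ is a self disjoint set in $\mathcal{H}$ of type $(i,j)$.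
   Context: A simple hypergraph $\mathcal{H}$ is a set $\mathcal{E}(\mathcal{H})$ of subsets (edges) of a finite vertex set $V(\mathcal{H})$, each of cardinality at least $2$, none contained in another; $d$-uniform means all edges have cardinality $d$. For $W\subseteq V(\mathcal{H})$, the induced subhypergraph $\mathcal{H}_W$ has vertex set $W$ and edges the edges of $\mathcal{H}$ contained in $W$. For an edge $S$, $N(S)=\bigcup_{E\in\mathcal{E}(\mathcal{H}),\,E\cap S\neq\emptyset}(E\setminus S)$. For a vertex $x$, $N[x]=\{x\}\cup\{y:\{x,y\}\subseteq E\text{ for some edge }E\}$; $x$ is simplicial if every $d$-subset of $N[x]$ is an edge. For a family $\mathcal{S}=\{T_1,\dots,T_i\}$ of distinct edges, its type is $(i,j)$ with $j=|\bigcup_\ell T_\ell|$. $\mathcal{S}$ is an induced matching if the $T_\ell$ are pairwise disjoint and no edge outside $\mathcal{S}$ is contained in $\bigcup_\ell T_\ell$; a self disjoint set if (i) for all $k$, $T_k\nsubseteq\bigcup_{\ell\neq k}T_\ell$, and (ii) there is an induced matching $\mathcal{S}_0\subseteq\mathcal{S}$ such that for every $T_\ell\in\mathcal{S}\setminus\mathcal{S}_0$ there is $T'\in\mathcal{S}_0$ with $|T_\ell\setminus T'|=1$ (all notions relative to the ambient hypergraph, $\mathcal{H}_2$ or $\mathcal{H}$). *)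

theory Defs
  imports Main
begin

definition simple_hg :: "'a set \<Rightarrow> 'a set set \<Rightarrow> bool" where
  "simple_hg V E \<longleftrightarrow> finite V \<and> (\<forall>e\<in>E. e \<subseteq> V \<and> card e \<ge> 2)
     \<and> (\<forall>e\<in>E. \<forall>e'\<in>E. e \<subseteq> e' \<longrightarrow> e = e')"

definition uniform_hg :: "nat \<Rightarrow> 'a set set \<Rightarrow> bool" where
  "uniform_hg d E \<longleftrightarrow> (\<forall>e\<in>E. card e = d)"

definition induced_edges :: "'a set set \<Rightarrow> 'a set \<Rightarrow> 'a set set" where
  "induced_edges E W = {e \<in> E. e \<subseteq> W}"

definition edge_nbhd :: "'a set set \<Rightarrow> 'a set \<Rightarrow> 'a set" where
  "edge_nbhd E S = \<Union>{e - S | e. e \<in> E \<and> e \<inter> S \<noteq> {}}"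

definition closed_nbhd :: "'a set set \<Rightarrow> 'a \<Rightarrow> 'a set" where
  "closed_nbhd E x = {x} \<union> {y. \<exists>e\<in>E. {x, y} \<subseteq> e}"

definition simplicial :: "nat \<Rightarrow> 'a set set \<Rightarrow> 'a \<Rightarrow> bool" where
  "simplicial d E x \<longleftrightarrow> (\<forall>U. U \<subseteq> closed_nbhd E x \<and> card U = d \<longrightarrow> U \<in> E)"

definition hg_type :: "'a set set \<Rightarrow> int \<times> int" where
  "hg_type F = (int (card F), int (card (\<Union>F)))"

definition induced_matching :: "'a set set \<Rightarrow> 'a set set \<Rightarrow> bool" where
  "induced_matching E F \<longleftrightarrow> F \<subseteq> E \<and> pairwise disjnt F
     \<and> (\<forall>e\<in>E. e \<subseteq> \<Union>F \<longrightarrow> e \<in> F)"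

definition self_disjoint :: "'a set set \<Rightarrow> 'a set set \<Rightarrow> bool" where
  "self_disjoint E F \<longleftrightarrow> F \<subseteq> E
     \<and> (\<forall>T\<in>F. \<not> T \<subseteq> \<Union>(F - {T}))
     \<and> (\<exists>F0\<subseteq>F. induced_matching E F0 \<and> (\<forall>T\<in>F - F0. \<exists>T'\<in>F0. card (T - T') = 1))"

end

theory Submission
  imports Defs
begin

text \<open>No vertex of \<open>S\<close> or of \<open>N(S)\<close> lies in \<open>\<H>\<^sub>2\<close>, so every edge of \<open>\<H>\<close> inside
  \<open>S \<union> \<Union>F\<^sub>0\<close> either avoids \<open>S\<close>, and then is an edge of \<open>\<H>\<^sub>2\<close> inside \<open>\<Union>F\<^sub>0\<close>, or is
  contained in \<open>S\<close>, and then equals \<open>S\<close>. Hence adding \<open>S\<close> to the induced matching \<open>F\<^sub>0\<close>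
  witnessing that \<open>\<S>'\<close> is self disjoint gives an induced matching of \<open>\<H>\<close>, and each
  \<open>S\<^sub>\<ell>\<close> is attached to it through \<open>|S\<^sub>\<ell> - S| = 1\<close>. Irredundancy holds because \<open>x\<close> is
  private to \<open>S\<close>, \<open>z\<^sub>\<ell>\<close> is private to \<open>S\<^sub>\<ell>\<close>, and \<open>\<S>'\<close> lives on vertices disjoint from
  \<open>S \<union> N(S)\<close>; the same disjointness makes the type additive.\<close>

definition irredundant :: "'a set set \<Rightarrow> bool" where
  "irredundant F \<longleftrightarrow> (\<forall>T\<in>F. \<not> T \<subseteq> \<Union>(F - {T}))"

lemma self_disjoint_iff:
  "self_disjoint E F \<longleftrightarrow> F \<subseteq> E \<and> irredundant F
     \<and> (\<exists>F0\<subseteq>F. induced_matching E F0 \<and> (\<forall>T\<in>F - F0. \<exists>T'\<in>F0. card (T - T') = 1))"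
  unfolding self_disjoint_def irredundant_def ..

lemma irredundant_empty_notin: "irredundant F \<Longrightarrow> {} \<notin> F"
  unfolding irredundant_def by blast

lemma irredundant_Un:
  assumes "irredundant F" "irredundant G" "\<Union>F \<inter> \<Union>G = {}"
  shows "irredundant (F \<union> G)"
  unfolding irredundant_def
proof (intro ballI notI)
  fix T assume T: "T \<in> F \<union> G" and cover: "T \<subseteq> \<Union>(F \<union> G - {T})"
  show False
  proof (cases "T \<in> F")
    case True
    have "T \<subseteq> \<Union>(F - {T}) \<union> \<Union>G" using cover by blast
    moreover have "T \<inter> \<Union>G = {}" using True assms(3) by blast
    ultimately have "T \<subseteq> \<Union>(F - {T})" by blast
    then show False using True assms(1) unfolding irredundant_def by blast
  next
    case False
    then have "T \<in> G" using T by blast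
    have "T \<subseteq> \<Union>F \<union> \<Union>(G - {T})" using cover by blast
    moreover have "T \<inter> \<Union>F = {}" using \<open>T \<in> G\<close> assms(3) by blast
    ultimately have "T \<subseteq> \<Union>(G - {T})" by blast
    then show False using \<open>T \<in> G\<close> assms(2) unfolding irredundant_def by blast
  qed
qed

lemma irredundant_star:
  assumes "x \<in> S" "\<forall>l\<in>I. x \<notin> Sf l" "\<forall>l\<in>I. Sf l - S = {z l}" "inj_on z I"
  shows "irredundant (insert S (Sf ` I))"
  unfolding irredundant_def
proof
  fix T assume "T \<in> insert S (Sf ` I)"
  then consider "T = S" | l where "l \<in> I" "T = Sf l" by blast
  then show "\<not> T \<subseteq> \<Union>(insert S (Sf ` I) - {T})"
  proof cases
    case 1
    then have "x \<notin> \<Union>(insert S (Sf ` I) - {T})" using assms(2) by blast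
    then show ?thesis using 1 assms(1) by blast
  next
    case 2
    have "z l \<notin> Sf m" if "m \<in> I" "Sf m \<noteq> Sf l" for m
      using that 2 assms(3,4) unfolding inj_on_def by blast
    then have "z l \<notin> \<Union>(insert S (Sf ` I) - {T})" using 2 assms(3) by blast
    then show ?thesis using 2 assms(3) by blast
  qed
qed

lemma Union_star:
  assumes "\<forall>l\<in>I. Sf l - S = {z l}"
  shows "\<Union>(insert S (Sf ` I)) = S \<union> z ` I"
  using assms by fastforce

lemma hg_type_star:
  assumes "finite I" "finite S" "\<forall>l\<in>I. Sf l - S = {z l}" "inj_on z I" "inj_on Sf I"
  shows "hg_type (insert S (Sf ` I)) = (1 + int (card I), int (card S) + int (card I))"
proof -
  have "S \<notin> Sf ` I" using assms(3) by blast
  then have "card (insert S (Sf ` I)) = 1 + card I"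
    using assms(1,5) by (simp add: card_image)
  moreover have "S \<inter> z ` I = {}" using assms(3) by blast
  then have "card (S \<union> z ` I) = card S + card I"
    using assms(1,2,4) by (simp add: card_Un_disjoint card_image)
  ultimately show ?thesis
    unfolding hg_type_def Union_star[OF assms(3)] by simp
qed

lemma hg_type_Un:
  assumes "finite F" "finite G" "finite (\<Union>F)" "finite (\<Union>G)" "{} \<notin> F" "\<Union>F \<inter> \<Union>G = {}"
  shows "hg_type (F \<union> G) = (fst (hg_type F) + fst (hg_type G), snd (hg_type F) + snd (hg_type G))"
proof -
  have "F \<inter> G = {}"
  proof (rule ccontr)
    assume "F \<inter> G \<noteq> {}"
    then obtain T where "T \<in> F" "T \<in> G" by blast
    then have "T \<subseteq> \<Union>F \<inter> \<Union>G" by blast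
    then show False using \<open>T \<in> F\<close> assms(5,6) by simp
  qed
  then have "card (F \<union> G) = card F + card G"
    using assms(1,2) by (rule card_Un_disjoint[rotated 2])
  moreover have "card (\<Union>(F \<union> G)) = card (\<Union>F) + card (\<Union>G)"
    unfolding Union_Un_distrib using assms(3,4,6) by (rule card_Un_disjoint)
  ultimately show ?thesis unfolding hg_type_def by simp
qed

lemma hg_type_Un_star:
  assumes "finite F" "finite (\<Union>F)" "{} \<notin> F" "\<Union>F \<inter> (S \<union> z ` I) = {}"
    and "finite I" "finite S" "\<forall>l\<in>I. Sf l - S = {z l}" "inj_on z I" "inj_on Sf I"
  shows "hg_type (F \<union> insert S (Sf ` I))
    = (fst (hg_type F) + 1 + int (card I), snd (hg_type F) + int (card S) + int (card I))"
proof -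
  have "hg_type (F \<union> insert S (Sf ` I))
      = (fst (hg_type F) + fst (hg_type (insert S (Sf ` I))),
         snd (hg_type F) + snd (hg_type (insert S (Sf ` I))))"
  proof (rule hg_type_Un)
    show "finite (\<Union>(insert S (Sf ` I)))" "\<Union>F \<inter> \<Union>(insert S (Sf ` I)) = {}"
      unfolding Union_star[OF assms(7)] using assms(4-6) by auto
  qed (use assms(1-5) in auto)
  then show ?thesis using hg_type_star[OF assms(5-9)] by simp
qed

lemma induced_matching_insert:
  assumes "induced_matching (induced_edges E W) F0" "S \<in> E" "\<forall>e\<in>E. e \<subseteq> S \<longrightarrow> e = S"
    and "W \<inter> (S \<union> edge_nbhd E S) = {}"
  shows "induced_matching E (insert S F0)"
  unfolding induced_matching_def
proof (intro conjI ballI impI)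
  have F0W: "\<Union>F0 \<subseteq> W"
    using assms(1) unfolding induced_matching_def induced_edges_def by blast
  show "insert S F0 \<subseteq> E"
    using assms(1,2) unfolding induced_matching_def induced_edges_def by blast
  have "disjnt T S" if "T \<in> F0" for T using that F0W assms(4) unfolding disjnt_def by blast
  then show "pairwise disjnt (insert S F0)"
    using assms(1) unfolding induced_matching_def by (simp add: pairwise_insert disjnt_sym)
  fix e assume e: "e \<in> E" "e \<subseteq> \<Union>(insert S F0)"
  show "e \<in> insert S F0"
  proof (cases "e \<inter> S = {}")
    case True
    then have "e \<subseteq> \<Union>F0" using e(2) by blast
    then show ?thesis
      using assms(1) e(1) F0W unfolding induced_matching_def induced_edges_def by blast
  next
    case False
    then have "e - S \<subseteq> edge_nbhd E S" using e(1) unfolding edge_nbhd_def by blast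
    moreover have "e - S \<subseteq> W" using e(2) F0W by blast
    ultimately have "e \<subseteq> S" using assms(4) by blast
    then show ?thesis using assms(3) e(1) by blast
  qed
qed

lemma self_disjoint_extend:
  assumes "self_disjoint (induced_edges E W) S'"
    and "S \<in> E" "\<forall>e\<in>E. e \<subseteq> S \<longrightarrow> e = S" "W \<inter> (S \<union> edge_nbhd E S) = {}"
    and "A \<subseteq> E" "W \<inter> \<Union>A = {}" "irredundant (insert S A)" "\<forall>T\<in>A. card (T - S) = 1"
  shows "self_disjoint E (S' \<union> insert S A)"
  unfolding self_disjoint_iff
proof (intro conjI)
  obtain F0 where F0: "F0 \<subseteq> S'" "induced_matching (induced_edges E W) F0"
      "\<forall>T\<in>S' - F0. \<exists>T'\<in>F0. card (T - T') = 1"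
    using assms(1) unfolding self_disjoint_iff by blast
  have S'W: "S' \<subseteq> induced_edges E W" using assms(1) unfolding self_disjoint_iff by blast
  then show "S' \<union> insert S A \<subseteq> E" using assms(2,5) unfolding induced_edges_def by blast
  have "\<Union>S' \<inter> \<Union>(insert S A) = {}" using S'W assms(4,6) unfolding induced_edges_def by blast
  then show "irredundant (S' \<union> insert S A)"
    using assms(1,7) irredundant_Un unfolding self_disjoint_iff by blast
  show "\<exists>F0'\<subseteq>S' \<union> insert S A. induced_matching E F0'
          \<and> (\<forall>T\<in>S' \<union> insert S A - F0'. \<exists>T'\<in>F0'. card (T - T') = 1)"
  proof (intro exI conjI)
    show "insert S F0 \<subseteq> S' \<union> insert S A" using F0(1) by blast
    show "induced_matching E (insert S F0)"
      using induced_matching_insert[OF F0(2) assms(2-4)] .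
    show "\<forall>T\<in>S' \<union> insert S A - insert S F0. \<exists>T'\<in>insert S F0. card (T - T') = 1"
      using F0(3) assms(8) by blast
  qed
qed

lemma simple_hg_finite:
  assumes "simple_hg V E" "F \<subseteq> E"
  shows "finite F" "finite (\<Union>F)"
proof -
  have "finite V" "E \<subseteq> Pow V" using assms(1) unfolding simple_hg_def by blast+
  then show "finite F" "finite (\<Union>F)"
    using assms(2) by (auto intro: finite_subset)
qed

theorem lemma3p4:
  fixes V :: "'a set" and E :: "'a set set" and d t :: nat and x :: 'a and S :: "'a set"
    and z :: "nat \<Rightarrow> 'a" and Sf :: "nat \<Rightarrow> 'a set" and S' :: "'a set set" and i j :: int
  assumes "d \<ge> 2"
    and "simple_hg V E" and "uniform_hg d E"
    and "\<forall>A\<in>E. \<forall>B\<in>E. A \<noteq> B \<and> A \<inter> B \<noteq> {} \<longrightarrow> card (A \<inter> B) = d - 1"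
    and "x \<in> V" and "simplicial d E x"
    and "S \<in> E" and "x \<in> S"
    and "inj_on z {1..t}" and "edge_nbhd E S = z ` {1..t}"
    and "inj_on Sf {1..t}"
    and "\<forall>l\<in>{1..t}. Sf l \<in> E \<and> Sf l - S = {z l} \<and> x \<notin> Sf l"
    and "self_disjoint (induced_edges E (V - (S \<union> edge_nbhd E S))) S'"
    and "hg_type S' = (i - 1 - int t, j - int d - int t)"
  shows "self_disjoint E (S' \<union> {S} \<union> Sf ` {1..t})
       \<and> hg_type (S' \<union> {S} \<union> Sf ` {1..t}) = (i, j)"
proof -
  define W where "W = V - (S \<union> edge_nbhd E S)"
  have Sf: "\<forall>l\<in>{1..t}. Sf l - S = {z l}" using assms(12) by blast
  have sdW: "self_disjoint (induced_edges E W) S'" using assms(13) unfolding W_def .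
  then have S'E: "S' \<subseteq> E" and US'W: "\<Union>S' \<subseteq> W" and "irredundant S'"
    unfolding self_disjoint_iff induced_edges_def by blast+
  have WS: "W \<inter> (S \<union> z ` {1..t}) = {}" unfolding W_def assms(10) by blast
  have "self_disjoint E (S' \<union> insert S (Sf ` {1..t}))"
  proof (rule self_disjoint_extend[OF sdW assms(7)])
    show "\<forall>e\<in>E. e \<subseteq> S \<longrightarrow> e = S" using assms(2,7) unfolding simple_hg_def by blast
    show "W \<inter> (S \<union> edge_nbhd E S) = {}" using WS unfolding assms(10) .
    show "Sf ` {1..t} \<subseteq> E" using assms(12) by blast
    show "W \<inter> \<Union>(Sf ` {1..t}) = {}" using WS Union_star[OF Sf] by blast
    show "irredundant (insert S (Sf ` {1..t}))"
      using irredundant_star[OF assms(8) _ Sf assms(9)] assms(12) by blast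
    show "\<forall>T\<in>Sf ` {1..t}. card (T - S) = 1" using Sf by simp
  qed
  moreover have "hg_type (S' \<union> insert S (Sf ` {1..t})) = (i, j)"
  proof -
    have "finite S" using simple_hg_finite(2)[OF assms(2), of "{S}"] assms(7) by simp
    moreover have "card S = d" using assms(3,7) unfolding uniform_hg_def by blast
    moreover have "\<Union>S' \<inter> (S \<union> z ` {1..t}) = {}" using US'W WS by blast
    ultimately show ?thesis
      using hg_type_Un_star[OF simple_hg_finite[OF assms(2) S'E] _ _ _ _ Sf assms(9,11)]
        irredundant_empty_notin[OF \<open>irredundant S'\<close>] assms(14) by simp
  qed
  ultimately show ?thesis by simp
qed

end
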